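(* In the configuration described in the context, suppose $R_1>R_2$ are positive integers. Then the three lengths $T_1T_2$, $C_1M$, $C_2M$ are all integers if and only if there exist positive integers $\delta, r_1, r_2, r_3$ with $\gcd(r_1,r_2)=1$ and $r_1^2+r_2^2=r_3^2$ such that $R_1=\delta r_1^2$ and $R_2=\delta r_2^2$ (necessarily $r_1>r_2$). In that case $T_1T_2 = 2\delta r_1r_2$, $IM=T_1M=T_2M=\delta r_1 r_2$, $C_1M=\delta r_1r_3$, $C_2M=\delta r_2 r_3$, and the lengths $T_1I = \frac{2\delta r_2r_1^2}{r_3}$, $T_2I=\frac{2\delta r_1r_2^2}{r_3}$, $C_1M_1=\frac{\delta r_1^3}{r_3}$, $C_2M_2=\frac{\delta r_2^3}{r_3}$, $M_1M = \frac{\delta r_1r_2^2}{r_3}$, $M_2M=\frac{\delta r_2r_1^2}{r_3}$, $C_2K=\frac{\delta r_2^2r_3^2}{r_1^2-r_2^2}$, $T_2K=\frac{2\delta r_2^3r_1}{r_1^2-r_2^2}$, $C_1K=\frac{\delta r_1^2r_3^2}{r_1^2-r_2^2}$, $T_1K=\frac{2\delta r_1^3r_2}{r_1^2-r_2^2}$ are rational.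
   Context: Configuration: two circles in the plane with centers $C_1,C_2$ and radii $R_1>R_2>0$, externally tangent at the point $I$ (so $I$ lies on segment $C_1C_2$ and $C_1C_2=R_1+R_2$). Let a common external tangent line touch the first circle at $T_1$ and the second circle at $T_2$ (both circles on the same side of line $T_1T_2$). Let $M$ be the midpoint of segment $T_1T_2$; equivalently, $M$ is the point where the common tangent line at $I$ (the line through $I$ perpendicular to $C_1C_2$) meets $T_1T_2$. Let $M_1$ be the midpoint of segment $T_1I$ (which is the intersection point of segment $C_1M$ with $T_1I$, the foot of the perpendicular from $C_1$ to $T_1I$), and $M_2$ the midpoint of segment $T_2I$ (the intersection of $C_2M$ with $T_2I$). Since $R_1>R_2$, the lines $T_1T_2$ and $C_1C_2$ meet at a point $K$, lying beyond $C_2$ on ray $C_1C_2$ and beyond $T_2$ on ray $T_1T_2$. For points $X,Y$, $XY$ denotes the length of segment $\overline{XY}$. *)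

theory Defs
  imports "HOL-Analysis.Analysis"
begin

end

theory Submission
  imports Defs "HOL-Computational_Algebra.Nth_Powers"
begin

(* We place every point of the figure in the affine frame with origin
   T1 and axes T2 - T1 (along the tangent) and C1 - T1 (along the first radius):
   frame x y = T1 + x (T2 - T1) + y (C1 - T1).  The two axes are orthogonal, the radius C2 - T2 is
   parallel to C1 - T1 (both are normal to the tangent, in the plane), and the distance of the
   centres forces |T2 - T1|^2 = 4ab; hence every distance is sqrt(4ab dx^2 + a^2 dy^2).
   In these coordinates C2 = (1, b/a), I = (a/(a+b), 2b/(a+b)) and K = (a/(a-b), 0).

   It then computes all lengths when a = d s1^2, b = d s2^2, s1^2 + s2^2 = s3^2.
   Independently, an arithmetic part shows that if 4 R1 R2 and R1 (R1 + R2) are perfect squares,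
   then R1 = d r1^2, R2 = d r2^2 with coprime r1, r2 and r1^2 + r2^2 a square.  Since
   T1T2 = sqrt(4 R1 R2) and C1M = sqrt(R1 (R1 + R2)), the main theorem follows by combining the
   two parts. *)

section \<open>Plane vectors orthogonal to a common vector\<close>

(* In the plane, two vectors normal to the same nonzero vector are linearly dependent, which in
   inner-product form is equality in the Cauchy-Schwarz inequality. *)
lemma orthogonal_to_common_vector_2:
  fixes w p q :: "real^2"
  assumes "w \<noteq> 0" "w \<bullet> p = 0" "w \<bullet> q = 0"
  shows "(p \<bullet> q)\<^sup>2 = (p \<bullet> p) * (q \<bullet> q)"
proof -
  have wp: "w$1 * p$1 + w$2 * p$2 = 0" and wq: "w$1 * q$1 + w$2 * q$2 = 0"
    using assms(2,3) by (simp_all add: inner_vec_def sum_2)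
  have "w$1 * (p$1 * q$2 - p$2 * q$1) = 0" "w$2 * (p$1 * q$2 - p$2 * q$1) = 0"
    using wp wq by algebra+
  moreover have "w$1 \<noteq> 0 \<or> w$2 \<noteq> 0"
    using assms(1) by (auto simp: vec_eq_iff forall_2)
  ultimately have cross: "p$1 * q$2 - p$2 * q$1 = 0" by auto
  have "(p \<bullet> q)\<^sup>2 = (p \<bullet> p) * (q \<bullet> q) - (p$1 * q$2 - p$2 * q$1)\<^sup>2"
    by (simp add: inner_vec_def sum_2 power2_eq_square algebra_simps)
  with cross show ?thesis by simp
qed

(* If moreover p and q point to the same side, q is the positive multiple of p of the right
   length; this makes the two radii to the tangent points parallel. *)
lemma parallel_of_orthogonal_to_common_vector_2:
  fixes w p q :: "real^2"
  assumes "w \<noteq> 0" "w \<bullet> p = 0" "w \<bullet> q = 0" "p \<bullet> q > 0"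
  shows "q = (norm q / norm p) *\<^sub>R p"
proof -
  have "(p \<bullet> q)\<^sup>2 = (norm p * norm q)\<^sup>2"
    using orthogonal_to_common_vector_2[OF assms(1-3)]
    by (simp add: power_mult_distrib dot_square_norm)
  hence "p \<bullet> q = norm p * norm q"
    using assms(4) by simp
  hence scaled: "norm p *\<^sub>R q = norm q *\<^sub>R p" by (simp add: norm_cauchy_schwarz_eq)
  have "p \<noteq> 0" using assms(4) by auto
  hence "q = (1 / norm p) *\<^sub>R (norm p *\<^sub>R q)" by simp
  also have "\<dots> = (norm q / norm p) *\<^sub>R p" by (simp add: scaled)
  finally show ?thesis .
qed

lemma norm_orthogonal_combination:
  fixes w p :: "'a::real_inner"
  assumes "w \<bullet> p = 0"
  shows "norm (x *\<^sub>R w + y *\<^sub>R p) = sqrt (x\<^sup>2 * (w \<bullet> w) + y\<^sup>2 * (p \<bullet> p))"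
  using assms unfolding norm_eq_sqrt_inner
  by (simp add: inner_add_left inner_add_right inner_commute[of p w] power2_eq_square)

section \<open>Coordinates for two tangent circles and a common tangent\<close>

locale tangent_circles =
  fixes C1 C2 I T1 T2 :: "real^2" and a b :: real
  assumes b_pos: "0 < b" and b_less_a: "b < a"
    and centres: "dist C1 C2 = a + b"
    and I_seg: "I \<in> closed_segment C1 C2" and I_dist: "dist C1 I = a"
    and T1_on: "dist C1 T1 = a" and T2_on: "dist C2 T2 = b"
    and tan1: "(T2 - T1) \<bullet> (T1 - C1) = 0" and tan2: "(T2 - T1) \<bullet> (T2 - C2) = 0"
    and T12: "T1 \<noteq> T2"
    and same_side: "(C1 - T1) \<bullet> (C2 - T2) > 0"
begin

definition frame :: "real \<Rightarrow> real \<Rightarrow> real^2" where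
  "frame x y = T1 + x *\<^sub>R (T2 - T1) + y *\<^sub>R (C1 - T1)"

lemma a_pos: "0 < a"
  using b_pos b_less_a by simp

lemma tangent_orthogonal: "(T2 - T1) \<bullet> (C1 - T1) = 0"
  using tan1 by (simp add: inner_diff_right)

lemma radius_norm: "norm (C1 - T1) = a" "norm (C2 - T2) = b"
  using T1_on T2_on by (simp_all add: dist_norm)

lemma radii_parallel: "C2 - T2 = (b / a) *\<^sub>R (C1 - T1)"
proof -
  have "(T2 - T1) \<bullet> (C2 - T2) = 0" using tan2 by (simp add: inner_diff_right)
  moreover have "T2 - T1 \<noteq> 0" using T12 by simp
  ultimately show ?thesis
    using parallel_of_orthogonal_to_common_vector_2 tangent_orthogonal same_side radius_norm
    by metis
qed

(* Note: these equations must not be used as left-to-right rewrite rules, since the frame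
   itself mentions T1, T2 and C1. *)
lemma frame_vertices: "T1 = frame 0 0" "T2 = frame 1 0" "C1 = frame 0 1" "C2 = frame 1 (b / a)"
proof -
  have "frame 1 (b / a) = T2 + (C2 - T2)" by (simp add: frame_def radii_parallel)
  thus "C2 = frame 1 (b / a)" by simp
qed (simp_all add: frame_def)

lemma frame_affine:
  assumes "u + v = 1"
  shows "u *\<^sub>R frame x y + v *\<^sub>R frame x' y' = frame (u * x + v * x') (u * y + v * y')"
proof -
  have "u *\<^sub>R T1 + v *\<^sub>R T1 = T1" using assms by (simp flip: scaleR_add_left)
  thus ?thesis by (simp add: frame_def algebra_simps)
qed

lemma frame_midpoint: "midpoint (frame x y) (frame x' y') = frame ((x + x') / 2) ((y + y') / 2)"
  using frame_affine[of "1/2" "1/2" x y x' y']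
  by (simp add: midpoint_def scaleR_add_right add_divide_distrib)

lemma tangent_midpoint_frame: "midpoint T1 T2 = frame (1 / 2) 0"
  using frame_midpoint[of 0 0 1 0] by (simp add: frame_vertices[symmetric])

lemma frame_normal_coordinate: "(frame x y - T1) \<bullet> (C1 - T1) = y * a\<^sup>2"
  by (simp add: frame_def inner_add_left tangent_orthogonal radius_norm(1) flip: power2_norm_eq_inner)

lemma frame_dist_general:
  "dist (frame x y) (frame x' y') = sqrt ((x - x')\<^sup>2 * ((T2 - T1) \<bullet> (T2 - T1)) + (y - y')\<^sup>2 * a\<^sup>2)"
proof -
  have "frame x y - frame x' y' = (x - x') *\<^sub>R (T2 - T1) + (y - y') *\<^sub>R (C1 - T1)"
    by (simp add: frame_def algebra_simps)
  moreover have "(C1 - T1) \<bullet> (C1 - T1) = a\<^sup>2"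
    by (simp add: radius_norm(1) flip: power2_norm_eq_inner)
  ultimately show ?thesis
    by (simp add: dist_norm norm_orthogonal_combination tangent_orthogonal)
qed

(* The length of the common tangent: T1T2^2 + (a - b)^2 = C1C2^2 = (a + b)^2. *)
lemma tangent_length_sq: "(T2 - T1) \<bullet> (T2 - T1) = 4 * a * b"
proof -
  have "sqrt ((T2 - T1) \<bullet> (T2 - T1) + (1 - b / a)\<^sup>2 * a\<^sup>2) = a + b"
    using centres frame_dist_general[of 0 1 1 "b / a"] by (simp add: frame_vertices[symmetric])
  moreover have "(1 - b / a)\<^sup>2 * a\<^sup>2 = (a - b)\<^sup>2"
    using a_pos by (simp add: field_simps power2_eq_square)
  ultimately have "(T2 - T1) \<bullet> (T2 - T1) + (a - b)\<^sup>2 = (a + b)\<^sup>2"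
    by (metis inner_ge_zero zero_le_power2 add_nonneg_nonneg real_sqrt_pow2)
  thus ?thesis by (simp add: power2_eq_square algebra_simps)
qed

lemma frame_dist:
  "dist (frame x y) (frame x' y') = sqrt ((x - x')\<^sup>2 * (4 * a * b) + (y - y')\<^sup>2 * a\<^sup>2)"
  using frame_dist_general tangent_length_sq by simp

lemma tangent_segment_length: "dist T1 T2 = sqrt (4 * a * b)"
  using frame_dist[of 0 0 1 0] by (simp add: frame_vertices[symmetric])

lemma centre_midpoint_length: "dist C1 (midpoint T1 T2) = sqrt (a * (a + b))"
proof -
  have "dist C1 (midpoint T1 T2) = sqrt ((1 / 2)\<^sup>2 * (4 * a * b) + a\<^sup>2)"
    using frame_dist[of 0 1 "1 / 2" 0] by (simp add: tangent_midpoint_frame frame_vertices[symmetric])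
  thus ?thesis by (simp add: power2_eq_square algebra_simps)
qed

(* I divides C1C2 in the ratio a : b. *)
lemma I_frame: "I = frame (a / (a + b)) (2 * b / (a + b))"
proof -
  obtain t where t: "0 \<le> t" "I = (1 - t) *\<^sub>R C1 + t *\<^sub>R C2"
    using I_seg unfolding closed_segment_def by blast
  hence "I - C1 = t *\<^sub>R (C2 - C1)" by (simp add: algebra_simps)
  moreover have "norm (I - C1) = a" "norm (C2 - C1) = a + b"
    using I_dist centres by (metis dist_commute dist_norm)+
  ultimately have "a = t * (a + b)"
    using t(1) by simp
  hence "t = a / (a + b)" using a_pos b_pos by (simp add: field_simps)
  moreover have "1 - a / (a + b) + a / (a + b) * (b / a) = 2 * b / (a + b)"
  proof -
    have "1 - a / (a + b) = b / (a + b)" "a / (a + b) * (b / a) = b / (a + b)"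
      using a_pos b_pos by (simp_all add: field_simps)
    thus ?thesis by simp
  qed
  ultimately show ?thesis
    using t(2) frame_affine[of "1 - t" t 0 1 1 "b / a"] by (simp add: frame_vertices[symmetric])
qed

(* The line of centres meets the tangent line where the second coordinate vanishes. *)
lemma K_frame:
  assumes "K \<in> affine hull {C1, C2}" "K \<in> affine hull {T1, T2}"
  shows "K = frame (a / (a - b)) 0"
proof -
  obtain u v where uv: "u + v = 1" "K = u *\<^sub>R C1 + v *\<^sub>R C2"
    using assms(1) unfolding affine_hull_2 by blast
  hence K_C: "K = frame v (u + v * (b / a))"
    using frame_affine[of u v 0 1 1 "b / a"] by (simp add: frame_vertices[symmetric])
  obtain u' v' where "u' + v' = 1" "K = u' *\<^sub>R T1 + v' *\<^sub>R T2"
    using assms(2) unfolding affine_hull_2 by blast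
  hence "K = frame v' 0"
    using frame_affine[of u' v' 0 0 1 0] by (simp add: frame_vertices[symmetric])
  hence "(frame v (u + v * (b / a)) - T1) \<bullet> (C1 - T1) = (frame v' 0 - T1) \<bullet> (C1 - T1)"
    using K_C by simp
  hence "(u + v * (b / a)) * a\<^sup>2 = 0 * a\<^sup>2"
    by (simp only: frame_normal_coordinate)
  hence normal: "u + v * (b / a) = 0" using a_pos by simp
  moreover have "u = 1 - v" using uv(1) by simp
  ultimately have "(1 - v) * a + v * b = 0"
    using a_pos by (simp add: field_simps)
  hence "v * (a - b) = a" by (simp add: algebra_simps)
  hence "v = a / (a - b)"
    using b_less_a by (simp add: field_simps)
  with K_C normal show ?thesis by simp
qed

context
  fixes d s1 s2 s3 :: real
  assumes param_pos: "0 < d" "0 < s1" "0 < s2" "0 < s3"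
    and pythagoras: "s1\<^sup>2 + s2\<^sup>2 = s3\<^sup>2"
    and a_param: "a = d * s1\<^sup>2" and b_param: "b = d * s2\<^sup>2"
begin

(* The distance formula, phrased so that each length reduces to a polynomial identity. *)
lemma param_dist_eqI:
  assumes "P = frame x y" "Q = frame x' y'"
    and "(x - x')\<^sup>2 * (2 * d * s1 * s2)\<^sup>2 + (y - y')\<^sup>2 * (d * s1\<^sup>2)\<^sup>2 = r\<^sup>2" "0 \<le> r"
  shows "dist P Q = r"
  using assms(3,4) unfolding assms(1,2) frame_dist
  by (simp add: a_param b_param power2_eq_square algebra_simps)

lemma param_points:
  "C2 = frame 1 (s2\<^sup>2 / s1\<^sup>2)"
  "I = frame (s1\<^sup>2 / s3\<^sup>2) (2 * s2\<^sup>2 / s3\<^sup>2)"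
  "midpoint T1 T2 = frame (1 / 2) 0"
  "midpoint T1 I = frame (s1\<^sup>2 / (2 * s3\<^sup>2)) (s2\<^sup>2 / s3\<^sup>2)"
  "midpoint T2 I = frame ((s1\<^sup>2 + s3\<^sup>2) / (2 * s3\<^sup>2)) (s2\<^sup>2 / s3\<^sup>2)"
proof -
  have sum: "a + b = d * s3\<^sup>2"
    by (simp add: a_param b_param flip: pythagoras) (simp add: algebra_simps)
  have "b / a = s2\<^sup>2 / s1\<^sup>2" "a / (a + b) = s1\<^sup>2 / s3\<^sup>2" "2 * b / (a + b) = 2 * s2\<^sup>2 / s3\<^sup>2"
    using param_pos unfolding sum by (simp_all add: a_param b_param)
  thus "C2 = frame 1 (s2\<^sup>2 / s1\<^sup>2)" and I: "I = frame (s1\<^sup>2 / s3\<^sup>2) (2 * s2\<^sup>2 / s3\<^sup>2)"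
    using frame_vertices(4) I_frame by simp_all
  show "midpoint T1 T2 = frame (1 / 2) 0" by (rule tangent_midpoint_frame)
  show "midpoint T1 I = frame (s1\<^sup>2 / (2 * s3\<^sup>2)) (s2\<^sup>2 / s3\<^sup>2)"
    using frame_midpoint[of 0 0] param_pos by (simp add: I frame_vertices[symmetric] field_simps)
  show "midpoint T2 I = frame ((s1\<^sup>2 + s3\<^sup>2) / (2 * s3\<^sup>2)) (s2\<^sup>2 / s3\<^sup>2)"
    using frame_midpoint[of 1 0] param_pos by (simp add: I frame_vertices[symmetric] field_simps)
qed

lemma param_K_frame:
  assumes "K \<in> affine hull {C1, C2}" "K \<in> affine hull {T1, T2}"
  shows "K = frame (s1\<^sup>2 / (s1\<^sup>2 - s2\<^sup>2)) 0"
proof -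
  have "a / (a - b) = s1\<^sup>2 / (s1\<^sup>2 - s2\<^sup>2)"
    using param_pos by (simp add: a_param b_param flip: right_diff_distrib)
  thus ?thesis using K_frame[OF assms] by simp
qed

lemma param_s2_less_s1: "s2 < s1"
proof -
  have "d * s2\<^sup>2 < d * s1\<^sup>2" using b_less_a by (simp add: a_param b_param)
  hence "s2\<^sup>2 < s1\<^sup>2" using param_pos by simp
  thus "s2 < s1" using param_pos by (simp add: power_less_imp_less_base)
qed

lemma param_midpoint_distances:
  "dist T1 T2 = 2 * d * s1 * s2 \<and>
   dist I (midpoint T1 T2) = d * s1 * s2 \<and>
   dist T1 (midpoint T1 T2) = d * s1 * s2 \<and>
   dist T2 (midpoint T1 T2) = d * s1 * s2 \<and>
   dist C1 (midpoint T1 T2) = d * s1 * s3 \<and>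
   dist C2 (midpoint T1 T2) = d * s2 * s3"
  apply (intro conjI; (rule param_dist_eqI, (rule frame_vertices(1-3) param_points)+))
  using param_pos apply (simp_all add: field_simps)
  using pythagoras apply algebra+
  done

lemma param_chord_distances:
  "dist T1 I = 2 * d * s2 * s1\<^sup>2 / s3 \<and>
   dist T2 I = 2 * d * s1 * s2\<^sup>2 / s3 \<and>
   dist C1 (midpoint T1 I) = d * s1 ^ 3 / s3 \<and>
   dist C2 (midpoint T2 I) = d * s2 ^ 3 / s3 \<and>
   dist (midpoint T1 I) (midpoint T1 T2) = d * s1 * s2\<^sup>2 / s3 \<and>
   dist (midpoint T2 I) (midpoint T1 T2) = d * s2 * s1\<^sup>2 / s3"
  apply (intro conjI; (rule param_dist_eqI, (rule frame_vertices(1-3) param_points)+))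
  using param_pos apply (simp_all add: field_simps)
  using pythagoras apply algebra+
  done

lemma param_K_distances:
  assumes "K \<in> affine hull {C1, C2}" "K \<in> affine hull {T1, T2}"
  shows "dist C2 K = d * s2\<^sup>2 * s3\<^sup>2 / (s1\<^sup>2 - s2\<^sup>2) \<and>
    dist T2 K = 2 * d * s2 ^ 3 * s1 / (s1\<^sup>2 - s2\<^sup>2) \<and>
    dist C1 K = d * s1\<^sup>2 * s3\<^sup>2 / (s1\<^sup>2 - s2\<^sup>2) \<and>
    dist T1 K = 2 * d * s1 ^ 3 * s2 / (s1\<^sup>2 - s2\<^sup>2)"
proof -
  have "s2\<^sup>2 < s1\<^sup>2" using param_pos param_s2_less_s1 by (simp add: power_strict_mono)
  hence gap: "0 < s1\<^sup>2 - s2\<^sup>2" "s1\<^sup>2 - s2\<^sup>2 \<noteq> 0" by simp_all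
  show ?thesis
    unfolding pythagoras[symmetric]
    apply (intro conjI;
        (rule param_dist_eqI, (rule frame_vertices(1-3) param_points param_K_frame[OF assms])+))
    using param_pos gap by (simp_all add: field_simps) (simp_all add: eval_nat_numeral algebra_simps)
qed

end

lemma integer_pythagorean_lengths:
  fixes d r1 r2 r3 :: nat and K :: "real^2"
  assumes pos: "0 < d" "0 < r1" "0 < r2" "0 < r3" and pyth: "r1^2 + r2^2 = r3^2"
    and radii: "a = real (d * r1^2)" "b = real (d * r2^2)"
    and K: "K \<in> affine hull {C1, C2}" "K \<in> affine hull {T1, T2}"
  shows "r2 < r1 \<and>
          dist T1 T2 = 2 * real d * real r1 * real r2 \<and>
          dist I (midpoint T1 T2) = real d * real r1 * real r2 \<and>
          dist T1 (midpoint T1 T2) = real d * real r1 * real r2 \<and>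
          dist T2 (midpoint T1 T2) = real d * real r1 * real r2 \<and>
          dist C1 (midpoint T1 T2) = real (d * r1 * r3) \<and>
          dist C2 (midpoint T1 T2) = real (d * r2 * r3) \<and>
          dist T1 I = 2 * real d * real r2 * (real r1)\<^sup>2 / real r3 \<and>
          dist T2 I = 2 * real d * real r1 * (real r2)\<^sup>2 / real r3 \<and>
          dist C1 (midpoint T1 I) = real d * real r1 ^ 3 / real r3 \<and>
          dist C2 (midpoint T2 I) = real d * real r2 ^ 3 / real r3 \<and>
          dist (midpoint T1 I) (midpoint T1 T2) = real d * real r1 * (real r2)\<^sup>2 / real r3 \<and>
          dist (midpoint T2 I) (midpoint T1 T2) = real d * real r2 * (real r1)\<^sup>2 / real r3 \<and>
          dist C2 K = real (d * r2\<^sup>2 * r3\<^sup>2) / ((real r1)\<^sup>2 - (real r2)\<^sup>2) \<and>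
          dist T2 K = 2 * real d * real r2 ^ 3 * real r1 / ((real r1)\<^sup>2 - (real r2)\<^sup>2) \<and>
          dist C1 K = real (d * r1\<^sup>2 * r3\<^sup>2) / ((real r1)\<^sup>2 - (real r2)\<^sup>2) \<and>
          dist T1 K = 2 * real d * real r1 ^ 3 * real r2 / ((real r1)\<^sup>2 - (real r2)\<^sup>2) \<and>
          dist T1 I \<in> \<rat> \<and> dist T2 I \<in> \<rat> \<and> dist C1 (midpoint T1 I) \<in> \<rat> \<and>
          dist C2 (midpoint T2 I) \<in> \<rat> \<and> dist (midpoint T1 I) (midpoint T1 T2) \<in> \<rat> \<and>
          dist (midpoint T2 I) (midpoint T1 T2) \<in> \<rat> \<and> dist C2 K \<in> \<rat> \<and>
          dist T2 K \<in> \<rat> \<and> dist C1 K \<in> \<rat> \<and> dist T1 K \<in> \<rat>"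
proof -
  have real_pos: "0 < real d" "0 < real r1" "0 < real r2" "0 < real r3"
    using pos by simp_all
  have real_pyth: "(real r1)\<^sup>2 + (real r2)\<^sup>2 = (real r3)\<^sup>2"
    using pyth by (metis of_nat_add of_nat_power)
  have real_radii: "a = real d * (real r1)\<^sup>2" "b = real d * (real r2)\<^sup>2"
    using radii by simp_all
  note params = real_pos real_pyth real_radii
  have "r2 < r1" using param_s2_less_s1[OF params] by simp
  moreover note param_midpoint_distances[OF params] param_chord_distances[OF params]
    param_K_distances[OF params K]
  ultimately show ?thesis
    by (simp only: of_nat_mult of_nat_power of_nat_numeral)
      (simp add: Rats_divide Rats_mult Rats_diff Rats_power)
qed

end

section \<open>Radii making the tangent and the centre-midpoint distances integral\<close>

lemma square_of_sqrt_in_Ints: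
  fixes n :: nat
  assumes "sqrt (real n) \<in> \<int>"
  shows "\<exists>k. n = k\<^sup>2"
proof -
  obtain z where z: "sqrt (real n) = of_int z" using assms Ints_cases by metis
  hence "0 \<le> z" by (metis of_int_0_le_iff real_sqrt_ge_zero of_nat_0_le_iff)
  moreover have "real n = (of_int z)\<^sup>2" using z by (metis of_nat_0_le_iff real_sqrt_pow2)
  ultimately have "real n = real ((nat z)\<^sup>2)" by simp
  thus ?thesis by (metis of_nat_eq_iff)
qed

lemma square_cofactor:
  fixes c x k :: nat
  assumes "0 < c" "c\<^sup>2 * x = k\<^sup>2"
  shows "\<exists>j. k = c * j \<and> x = j\<^sup>2"
proof -
  have "c\<^sup>2 dvd k\<^sup>2" using assms(2) by (metis dvd_triv_left)
  hence "c dvd k" by simp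
  then obtain j where j: "k = c * j" ..
  hence "c\<^sup>2 * x = c\<^sup>2 * j\<^sup>2" using assms(2) by (simp add: power_mult_distrib)
  hence "x = j\<^sup>2" using assms(1) by simp
  with j show ?thesis by blast
qed

(* Writing R1 = d x, R2 = d y with d = gcd R1 R2: 4 R1 R2 square makes the coprime x, y
   squares r1^2, r2^2, and then R1 (R1 + R2) = (d r1)^2 (r1^2 + r2^2) square makes
   r1^2 + r2^2 a square. *)
lemma pythagorean_radii:
  fixes R1 R2 k m :: nat
  assumes "0 < R1" "0 < R2" "4 * R1 * R2 = k\<^sup>2" "R1 * (R1 + R2) = m\<^sup>2"
  shows "\<exists>d r1 r2 r3 :: nat. 0 < d \<and> 0 < r1 \<and> 0 < r2 \<and> 0 < r3 \<and> coprime r1 r2 \<and>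
           r1\<^sup>2 + r2\<^sup>2 = r3\<^sup>2 \<and> R1 = d * r1\<^sup>2 \<and> R2 = d * r2\<^sup>2"
proof -
  define d where "d = gcd R1 R2"
  define x where "x = R1 div d"
  define y where "y = R2 div d"
  have d_pos: "0 < d" using assms(1) by (simp add: d_def)
  have R1: "R1 = d * x" and R2: "R2 = d * y" by (simp_all add: x_def y_def d_def)
  have "coprime x y" unfolding x_def y_def d_def using assms(1) by (intro div_gcd_coprime) simp
  have xy_pos: "0 < x" "0 < y" using R1 R2 assms(1,2) by auto
  have "(2 * d)\<^sup>2 * (x * y) = k\<^sup>2" using assms(3) R1 R2 by (simp add: power2_eq_square algebra_simps)
  then obtain j where "x * y = j\<^sup>2"
    using square_cofactor d_pos by (metis mult_pos_pos zero_less_numeral)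
  hence "is_nth_power 2 x" "is_nth_power 2 y"
    using is_nth_power_mult_coprime_natD[OF \<open>coprime x y\<close> _ xy_pos]
    by (auto simp: is_nth_power_def)
  then obtain r1 r2 where r1: "x = r1\<^sup>2" and r2: "y = r2\<^sup>2" by (auto simp: is_nth_power_def)
  have r_pos: "0 < r1" "0 < r2" using xy_pos r1 r2 by auto
  have "(d * r1)\<^sup>2 * (r1\<^sup>2 + r2\<^sup>2) = m\<^sup>2"
    using assms(4) R1 R2 r1 r2 by (simp add: power2_eq_square algebra_simps)
  then obtain r3 where r3: "r1\<^sup>2 + r2\<^sup>2 = r3\<^sup>2"
    using square_cofactor d_pos r_pos by (metis mult_pos_pos)
  have "0 < r3" using r3 r_pos(1) by (cases "r3 = 0") auto
  moreover have "coprime r1 r2" using \<open>coprime x y\<close> r1 r2 by simp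
  ultimately show ?thesis using d_pos r_pos r3 R1 R2 r1 r2 by blast
qed

theorem mainTheorem3:
  fixes C1 C2 I T1 T2 M M1 M2 K :: "real^2"
    and R1 R2 :: nat
  assumes R2pos: "0 < R2" and R12: "R2 < R1"
    and cen: "dist C1 C2 = real R1 + real R2"
    and I_seg: "I \<in> closed_segment C1 C2" and I_dist: "dist C1 I = real R1"
    and T1_on: "dist C1 T1 = real R1" and T2_on: "dist C2 T2 = real R2"
    and tan1: "(T2 - T1) \<bullet> (T1 - C1) = 0" and tan2: "(T2 - T1) \<bullet> (T2 - C2) = 0"
    and T12: "T1 \<noteq> T2"
    and same_side: "(C1 - T1) \<bullet> (C2 - T2) > 0"
    and M_def: "M = midpoint T1 T2"
    and M1_def: "M1 = midpoint T1 I" and M2_def: "M2 = midpoint T2 I"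
    and K_C: "K \<in> affine hull {C1, C2}" and K_T: "K \<in> affine hull {T1, T2}"
  shows "((dist T1 T2 \<in> \<int> \<and> dist C1 M \<in> \<int> \<and> dist C2 M \<in> \<int>) \<longleftrightarrow>
          (\<exists>d r1 r2 r3 :: nat. 0 < d \<and> 0 < r1 \<and> 0 < r2 \<and> 0 < r3 \<and> coprime r1 r2 \<and>
              r1^2 + r2^2 = r3^2 \<and> R1 = d * r1^2 \<and> R2 = d * r2^2))
     \<and> (\<forall>d r1 r2 r3 :: nat. 0 < d \<and> 0 < r1 \<and> 0 < r2 \<and> 0 < r3 \<and> coprime r1 r2 \<and>
              r1^2 + r2^2 = r3^2 \<and> R1 = d * r1^2 \<and> R2 = d * r2^2 \<longrightarrow>
          r2 < r1 \<and>
          dist T1 T2 = 2 * d * r1 * r2 \<and>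
          dist I M = d * r1 * r2 \<and> dist T1 M = d * r1 * r2 \<and> dist T2 M = d * r1 * r2 \<and>
          dist C1 M = d * r1 * r3 \<and> dist C2 M = d * r2 * r3 \<and>
          dist T1 I = 2 * d * r2 * r1^2 / r3 \<and> dist T2 I = 2 * d * r1 * r2^2 / r3 \<and>
          dist C1 M1 = d * r1^3 / r3 \<and> dist C2 M2 = d * r2^3 / r3 \<and>
          dist M1 M = d * r1 * r2^2 / r3 \<and> dist M2 M = d * r2 * r1^2 / r3 \<and>
          dist C2 K = d * r2^2 * r3^2 / (real r1^2 - real r2^2) \<and>
          dist T2 K = 2 * d * r2^3 * r1 / (real r1^2 - real r2^2) \<and>
          dist C1 K = d * r1^2 * r3^2 / (real r1^2 - real r2^2) \<and>
          dist T1 K = 2 * d * r1^3 * r2 / (real r1^2 - real r2^2) \<and>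
          dist T1 I \<in> \<rat> \<and> dist T2 I \<in> \<rat> \<and> dist C1 M1 \<in> \<rat> \<and> dist C2 M2 \<in> \<rat> \<and>
          dist M1 M \<in> \<rat> \<and> dist M2 M \<in> \<rat> \<and> dist C2 K \<in> \<rat> \<and> dist T2 K \<in> \<rat> \<and>
          dist C1 K \<in> \<rat> \<and> dist T1 K \<in> \<rat>)"
proof -
  interpret tangent_circles C1 C2 I T1 T2 "real R1" "real R2"
    by unfold_locales (use assms in auto)
  note lengths = integer_pythagorean_lengths[OF _ _ _ _ _ _ _ K_C K_T,
      folded M_def M1_def M2_def]
  show ?thesis
  proof (rule conjI, rule iffI, goal_cases integral_lengths pythagorean_radii all_lengths)
    case integral_lengths
    hence "sqrt (real (4 * R1 * R2)) \<in> \<int>" "sqrt (real (R1 * (R1 + R2))) \<in> \<int>"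
      using tangent_segment_length centre_midpoint_length by (simp_all add: M_def)
    then obtain k m where "4 * R1 * R2 = k\<^sup>2" "R1 * (R1 + R2) = m\<^sup>2"
      using square_of_sqrt_in_Ints by metis
    thus ?case using pythagorean_radii R2pos R12 by simp
  next
    case pythagorean_radii
    then obtain d r1 r2 r3 :: nat where "0 < d" "0 < r1" "0 < r2" "0 < r3"
      "r1\<^sup>2 + r2\<^sup>2 = r3\<^sup>2" "R1 = d * r1\<^sup>2" "R2 = d * r2\<^sup>2" by blast
    with lengths[of d r1 r2 r3] show ?case by simp
  next
    case all_lengths
    show ?case by (intro allI impI, elim conjE) (rule lengths; simp)
  qed
qed

end
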